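(* Let $v$ be the linear classifier defined by $\vec w\in\mathbb{R}^n$ and $q\in\mathbb{R}$, and let $i\neq j$. If $w_i\ge w_j>0$, then $\mathrm{Vol}(\mathit{Piv}_j)\le\mathrm{Vol}(\mathit{Piv}_i)$.
   Context: The linear classifier defined by $\vec w$ and $q$ is $v:[0,1]^n\to\{0,1\}$, $v(\vec x)=1$ iff $\vec x\cdot\vec w\ge q$. For $\vec x\in[0,1]^n$, $b\in[0,1]$, $(\vec x_{-k},b)$ is $\vec x$ with $k$-th coordinate replaced by $b$. $\mathit{Piv}_k=\{(\vec x,b)\in[0,1]^{n+1}: v(\vec x)=0,\ v(\vec x_{-k},b)=1\}$, and $\mathrm{Vol}$ is Lebesgue measure on $\mathbb{R}^{n+1}$. *)

theory Defs
  imports "HOL-Analysis.Analysis"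
begin

definition lin_clf :: "real^'n \<Rightarrow> real \<Rightarrow> real^'n \<Rightarrow> bool" where
  "lin_clf w q x \<longleftrightarrow> x \<bullet> w \<ge> q"

definition repl :: "real^'n \<Rightarrow> 'n \<Rightarrow> real \<Rightarrow> real^'n" where
  "repl x k b = (\<chi> l. if l = k then b else x $ l)"

text \<open>Piv_k as a subset of [0,1]^n x [0,1] (identified with [0,1]^(n+1)).\<close>
definition Piv :: "real^'n \<Rightarrow> real \<Rightarrow> 'n \<Rightarrow> ((real^'n) \<times> real) set" where
  "Piv w q k = {(x, b). (\<forall>l. 0 \<le> x $ l \<and> x $ l \<le> 1) \<and> 0 \<le> b \<and> b \<le> 1
      \<and> \<not> lin_clf w q x \<and> lin_clf w q (repl x k b)}"

end

theory Submission
  imports Defs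
begin

text \<open>
  A point \<open>(x, b)\<close> of the cube lies in \<open>Piv\<^sub>k\<close> or in \<open>Stay_pos\<^sub>k\<close> (where \<open>v\<close> is \<open>1\<close> both at
  \<open>x\<close> and at \<open>(x\<^sub>-\<^sub>k, b)\<close>) exactly when \<open>v(x\<^sub>-\<^sub>k, b) = 1\<close>. Exchanging \<open>x\<^sub>k\<close> with \<open>b\<close> preserves
  Lebesgue measure and maps this union onto \<open>{v = 1} \<times> [0,1]\<close>, so
  \<open>Vol Piv\<^sub>k = Vol ({v = 1} \<times> [0,1]) - Vol Stay_pos\<^sub>k\<close> and it suffices to show
  \<open>Vol Stay_pos\<^sub>i \<le> Vol Stay_pos\<^sub>j\<close>. For \<open>w\<^sub>k \<ge> 0\<close>, membership in \<open>Stay_pos\<^sub>k\<close> says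
  \<open>x \<cdot> w + (min x\<^sub>k b - x\<^sub>k) w\<^sub>k \<ge> q\<close>. Split \<open>Stay_pos\<^sub>i\<close> according to the relative order of
  \<open>x\<^sub>i\<close>, \<open>x\<^sub>j\<close> and \<open>b\<close>: each piece is carried by a permutation of these three coordinates into
  \<open>Stay_pos\<^sub>j\<close>, onto pairwise disjoint regions. The only inequality needed is that putting the
  larger weight \<open>w\<^sub>i\<close> on the larger of two values does not decrease \<open>x \<cdot> w\<close>.
\<close>

lemma inner_basis_involution:
  fixes T :: "'a::euclidean_space \<Rightarrow> 'a"
  assumes lin: "linear T" and inv: "\<And>x. T (T x) = x" and B: "\<And>b. b \<in> Basis \<Longrightarrow> T b \<in> Basis"
    and b: "b \<in> Basis"
  shows "T x \<bullet> b = x \<bullet> T b"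
proof -
  have "T x \<bullet> b = (\<Sum>c\<in>Basis. (x \<bullet> c) * (T c \<bullet> b))"
    by (subst euclidean_representation[symmetric, of x])
       (simp add: linear_sum[OF lin] linear_scale[OF lin] inner_sum_left)
  also have "\<dots> = (\<Sum>c\<in>Basis. if c = T b then x \<bullet> c else 0)"
  proof (rule sum.cong)
    fix c :: 'a assume c: "c \<in> Basis"
    have "T c = b \<longleftrightarrow> c = T b" using inv by metis
    then show "(x \<bullet> c) * (T c \<bullet> b) = (if c = T b then x \<bullet> c else 0)"
      using inner_Basis[OF B[OF c] b] by auto
  qed simp
  also have "\<dots> = x \<bullet> T b" using B[OF b] by simp
  finally show ?thesis .
qed

lemma distr_lborel_basis_involution:
  fixes T :: "'a::euclidean_space \<Rightarrow> 'a"
  assumes lin: "linear T" and inv: "\<And>x. T (T x) = x" and B: "\<And>b. b \<in> Basis \<Longrightarrow> T b \<in> Basis"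
  shows "distr lborel borel T = lborel"
proof (rule lborel_eqI[symmetric])
  have meas: "T \<in> borel_measurable borel"
    using lin by (intro borel_measurable_continuous_onI linear_continuous_on
        linear_conv_bounded_linear[THEN iffD1])
  have ip: "\<And>x b. b \<in> Basis \<Longrightarrow> T x \<bullet> b = x \<bullet> T b"
    using inner_basis_involution[OF lin inv B] by blast
  have bij: "bij_betw T Basis Basis"
    by (rule bij_betwI[where g=T]) (auto simp: B inv)
  fix l u :: 'a assume le: "\<And>b. b \<in> Basis \<Longrightarrow> l \<bullet> b \<le> u \<bullet> b"
  have pre: "T -` box l u = box (T l) (T u)"
  proof (intro set_eqI iffI)
    fix x assume "x \<in> T -` box l u"
    then have "\<forall>b\<in>Basis. l \<bullet> b < x \<bullet> T b \<and> x \<bullet> T b < u \<bullet> b"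
      by (auto simp: mem_box ip)
    then show "x \<in> box (T l) (T u)"
      unfolding mem_box using B inv by (metis ip)
  next
    fix x assume "x \<in> box (T l) (T u)"
    then have "\<forall>c\<in>Basis. l \<bullet> T c < x \<bullet> c \<and> x \<bullet> c < u \<bullet> T c"
      by (auto simp: mem_box ip)
    then show "x \<in> T -` box l u"
      unfolding mem_box vimage_eq using B inv by (metis ip)
  qed
  have "(\<Prod>b\<in>Basis. (T u - T l) \<bullet> b) = (\<Prod>b\<in>Basis. (u - l) \<bullet> T b)"
    by (rule prod.cong) (auto simp: ip inner_diff_left)
  also have "\<dots> = (\<Prod>b\<in>Basis. (u - l) \<bullet> b)"
    using prod.reindex_bij_betw[OF bij, of "\<lambda>b. (u - l) \<bullet> b"] by simp
  finally have "(\<Prod>b\<in>Basis. (T u - T l) \<bullet> b) = (\<Prod>b\<in>Basis. (u - l) \<bullet> b)" .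
  moreover have "\<forall>b\<in>Basis. T l \<bullet> b \<le> T u \<bullet> b"
    using le B by (simp add: ip)
  ultimately show "emeasure (distr lborel borel T) (box l u) = (\<Prod>b\<in>Basis. (u - l) \<bullet> b)"
    using meas by (simp add: emeasure_distr pre emeasure_lborel_box_eq)
qed simp

lemma
  fixes T :: "'a::euclidean_space \<Rightarrow> 'a"
  assumes lin: "linear T" and inv: "\<And>x. T (T x) = x" and B: "\<And>b. b \<in> Basis \<Longrightarrow> T b \<in> Basis"
    and A: "A \<in> sets borel"
  shows sets_vimage_basis_involution: "T -` A \<in> sets borel"
    and emeasure_vimage_basis_involution: "emeasure lborel (T -` A) = emeasure lborel A"
proof -
  have meas: "T \<in> borel_measurable borel"
    using lin by (intro borel_measurable_continuous_onI linear_continuous_on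
        linear_conv_bounded_linear[THEN iffD1])
  show "T -` A \<in> sets borel"
    using measurable_sets[OF meas A] by simp
  have "emeasure lborel A = emeasure (distr lborel borel T) A"
    using distr_lborel_basis_involution[OF lin inv B] by simp
  then show "emeasure lborel (T -` A) = emeasure lborel A"
    using meas A by (simp add: emeasure_distr)
qed

lemma borel_measurable_vec_nth_compose[measurable (raw)]:
  fixes f :: "'a \<Rightarrow> real^'n"
  assumes "f \<in> borel_measurable M"
  shows "(\<lambda>x. f x $ l) \<in> borel_measurable M"
  using measurable_compose[OF assms borel_measurable_nth] by simp

lemma borel_measurable_fst_snd_compose[measurable (raw)]:
  fixes f :: "'a \<Rightarrow> 'b::euclidean_space \<times> 'c::euclidean_space"
  assumes "f \<in> borel_measurable M"
  shows "(\<lambda>x. fst (f x)) \<in> borel_measurable M" "(\<lambda>x. snd (f x)) \<in> borel_measurable M"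
proof -
  have "(fst :: 'b \<times> 'c \<Rightarrow> 'b) \<in> borel_measurable borel" "(snd :: 'b \<times> 'c \<Rightarrow> 'c) \<in> borel_measurable borel"
    by (intro borel_measurable_continuous_onI continuous_intros)+
  from this[THEN measurable_compose[OF assms]]
  show "(\<lambda>x. fst (f x)) \<in> borel_measurable M" "(\<lambda>x. snd (f x)) \<in> borel_measurable M"
    by simp_all
qed

lemma Basis_vec_times_real:
  "(p :: (real^'n) \<times> real) \<in> Basis \<longleftrightarrow> (\<exists>l. p = (axis l 1, 0)) \<or> p = (0, 1)"
  by (auto simp: Basis_prod_def Basis_vec_def)

lemma repl_nth [simp]: "repl x k b $ l = (if l = k then b else x $ l)"
  by (simp add: repl_def)

lemma inner_repl: "repl x k b \<bullet> w = x \<bullet> w + (b - x $ k) * w $ k"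
proof -
  have "repl x k b \<bullet> w = b * w $ k + (\<Sum>l\<in>UNIV - {k}. x $ l * w $ l)"
    by (auto simp: inner_vec_def sum.remove[of _ k] intro!: sum.cong)
  moreover have "x \<bullet> w = x $ k * w $ k + (\<Sum>l\<in>UNIV - {k}. x $ l * w $ l)"
    by (simp add: inner_vec_def sum.remove[of _ k])
  ultimately show ?thesis by (simp add: algebra_simps)
qed

lemma lin_clf_repl: "lin_clf w q (repl x k b) \<longleftrightarrow> q \<le> x \<bullet> w + (b - x $ k) * w $ k"
  by (simp add: lin_clf_def inner_repl)

definition unit_cube :: "((real^'n) \<times> real) set" where
  "unit_cube = {(x, b). (\<forall>l. 0 \<le> x $ l \<and> x $ l \<le> 1) \<and> 0 \<le> b \<and> b \<le> 1}"

definition swap_coords :: "'n \<Rightarrow> 'n \<Rightarrow> (real^'n) \<times> real \<Rightarrow> (real^'n) \<times> real" where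
  "swap_coords i j = (\<lambda>(x, b). (\<chi> l. if l = i then x $ j else if l = j then x $ i else x $ l, b))"

definition swap_pivot :: "'n \<Rightarrow> (real^'n) \<times> real \<Rightarrow> (real^'n) \<times> real" where
  "swap_pivot k = (\<lambda>(x, b). (repl x k b, x $ k))"

lemma swap_coords_nth [simp]:
  "fst (swap_coords i j p) $ l = (if l = i then fst p $ j else if l = j then fst p $ i else fst p $ l)"
  and snd_swap_coords [simp]: "snd (swap_coords i j p) = snd p"
  by (simp_all add: swap_coords_def split: prod.split)

lemma fst_swap_pivot [simp]: "fst (swap_pivot k p) = repl (fst p) k (snd p)"
  and snd_swap_pivot [simp]: "snd (swap_pivot k p) = fst p $ k"
  by (simp_all add: swap_pivot_def split: prod.split)

lemma inner_swap_coords: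
  assumes "i \<noteq> j"
  shows "fst (swap_coords i j p) \<bullet> w
    = fst p \<bullet> w + (fst p $ j - fst p $ i) * w $ i + (fst p $ i - fst p $ j) * w $ j"
proof -
  have "fst (swap_coords i j p) = repl (repl (fst p) i (fst p $ j)) j (fst p $ i)"
    using assms by (auto simp: vec_eq_iff)
  then show ?thesis
    using assms by (simp add: inner_repl algebra_simps)
qed

lemma swap_coords_basis_involution:
  shows "linear (swap_coords i j)" "swap_coords i j (swap_coords i j p) = p"
    and "b \<in> Basis \<Longrightarrow> swap_coords i j b \<in> Basis"
proof -
  show "linear (swap_coords i j)"
    by (rule linearI) (auto simp: swap_coords_def vec_eq_iff)
  show "swap_coords i j (swap_coords i j p) = p"
    by (auto simp: swap_coords_def vec_eq_iff split: prod.split)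
  assume "b \<in> Basis"
  then consider l where "b = (axis l 1, 0)" | "b = (0, 1)"
    by (auto simp: Basis_vec_times_real)
  then show "swap_coords i j b \<in> Basis"
  proof cases
    case 1
    then have "swap_coords i j b = (axis (if l = i then j else if l = j then i else l) 1, 0)"
      by (auto simp: swap_coords_def vec_eq_iff axis_def)
    then show ?thesis by (auto simp: Basis_vec_times_real)
  qed (auto simp: swap_coords_def vec_eq_iff Basis_vec_times_real)
qed

lemma swap_pivot_basis_involution:
  shows "linear (swap_pivot k)" "swap_pivot k (swap_pivot k p) = p"
    and "b \<in> Basis \<Longrightarrow> swap_pivot k b \<in> Basis"
proof -
  show "linear (swap_pivot k)"
    by (rule linearI) (auto simp: swap_pivot_def vec_eq_iff)
  show "swap_pivot k (swap_pivot k p) = p"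
    by (auto simp: swap_pivot_def vec_eq_iff split: prod.split)
  assume "b \<in> Basis"
  then consider l where "b = (axis l 1, 0)" | "b = (0, 1)"
    by (auto simp: Basis_vec_times_real)
  then show "swap_pivot k b \<in> Basis"
  proof cases
    case 1
    then have "swap_pivot k b = (if l = k then (0, 1) else (axis l 1, 0))"
      by (auto simp: swap_pivot_def vec_eq_iff axis_def)
    then show ?thesis by (auto simp: Basis_vec_times_real)
  next
    case 2
    then have "swap_pivot k b = (axis k 1, 0)"
      by (auto simp: swap_pivot_def vec_eq_iff axis_def)
    then show ?thesis by (auto simp: Basis_vec_times_real)
  qed
qed

lemmas sets_vimage_swap_coords = sets_vimage_basis_involution[OF swap_coords_basis_involution]
lemmas emeasure_vimage_swap_coords = emeasure_vimage_basis_involution[OF swap_coords_basis_involution]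
lemmas sets_vimage_swap_pivot = sets_vimage_basis_involution[OF swap_pivot_basis_involution]
lemmas emeasure_vimage_swap_pivot = emeasure_vimage_basis_involution[OF swap_pivot_basis_involution]

lemma swap_coords_in_unit_cube_iff: "swap_coords i j p \<in> unit_cube \<longleftrightarrow> p \<in> unit_cube"
proof -
  obtain x b where p: "p = (x, b)" by fastforce
  have "(\<forall>l. P (if l = i then x $ j else if l = j then x $ i else x $ l)) \<longleftrightarrow> (\<forall>l. P (x $ l))" for P
  proof (intro iffI allI)
    fix l assume "\<forall>l. P (if l = i then x $ j else if l = j then x $ i else x $ l)"
    from spec[OF this, of "if l = i then j else if l = j then i else l"] show "P (x $ l)"
      by (auto split: if_splits)
  qed simp
  from this[of "\<lambda>t. 0 \<le> t \<and> t \<le> 1"] show ?thesis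
    by (simp add: p swap_coords_def unit_cube_def split del: if_split)
qed

lemma swap_pivot_in_unit_cube_iff: "swap_pivot k p \<in> unit_cube \<longleftrightarrow> p \<in> unit_cube"
proof -
  obtain x b where p: "p = (x, b)" by fastforce
  have "(\<forall>l. P (if l = k then b else x $ l)) \<and> P (x $ k) \<longleftrightarrow> (\<forall>l. P (x $ l)) \<and> P b" for P
    by (metis (full_types))
  from this[of "\<lambda>t. 0 \<le> t \<and> t \<le> 1"] show ?thesis
    by (simp add: p swap_pivot_def unit_cube_def split del: if_split)
qed

lemma sets_unit_cube [measurable]: "unit_cube \<in> sets borel"
  unfolding unit_cube_def by measurable

lemma emeasure_unit_cube_less_top: "emeasure lborel unit_cube < \<infinity>"
proof -
  have "unit_cube \<subseteq> cbox (0, 0) (1, 1)"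
    by (auto simp: unit_cube_def cbox_Pair_eq mem_box_cart)
  then show ?thesis
    by (rule le_less_trans[OF emeasure_mono emeasure_lborel_cbox_finite]) simp
qed

definition Pos :: "real^'n \<Rightarrow> real \<Rightarrow> ((real^'n) \<times> real) set" where
  "Pos w q = unit_cube \<inter> {(x, b). lin_clf w q x}"

definition Stay_pos :: "real^'n \<Rightarrow> real \<Rightarrow> 'n \<Rightarrow> ((real^'n) \<times> real) set" where
  "Stay_pos w q k = unit_cube \<inter> {(x, b). lin_clf w q x \<and> lin_clf w q (repl x k b)}"

lemma emeasure_Stay_pos_less_top:
  fixes w :: "real^'n"
  shows "emeasure lborel (Stay_pos w q k) < \<infinity>"
proof -
  have "emeasure lborel (Stay_pos w q k) \<le> emeasure lborel (unit_cube :: ((real^'n) \<times> real) set)"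
    by (intro emeasure_mono) (auto simp: Stay_pos_def)
  then show ?thesis
    using emeasure_unit_cube_less_top by (rule le_less_trans)
qed

lemma mem_Pos: "p \<in> Pos w q \<longleftrightarrow> p \<in> unit_cube \<and> lin_clf w q (fst p)"
  by (cases p) (simp add: Pos_def)

lemma mem_Stay_pos:
  "p \<in> Stay_pos w q k \<longleftrightarrow> p \<in> unit_cube \<and> lin_clf w q (fst p) \<and> lin_clf w q (repl (fst p) k (snd p))"
  by (cases p) (simp add: Stay_pos_def)

lemma mem_Piv:
  "p \<in> Piv w q k \<longleftrightarrow> p \<in> unit_cube \<and> \<not> lin_clf w q (fst p) \<and> lin_clf w q (repl (fst p) k (snd p))"
  by (cases p) (auto simp: Piv_def unit_cube_def)

lemma sets_Pos [measurable]: "Pos w q \<in> sets borel"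
  unfolding Pos_def lin_clf_def by measurable

lemma sets_Stay_pos [measurable]: "Stay_pos w q k \<in> sets borel"
  unfolding Stay_pos_def lin_clf_repl unfolding lin_clf_def by measurable

lemma sets_Piv [measurable]: "Piv w q k \<in> sets borel"
  unfolding Piv_def lin_clf_repl unfolding lin_clf_def by measurable

lemma vimage_swap_pivot_Pos: "swap_pivot k -` Pos w q = Piv w q k \<union> Stay_pos w q k"
  unfolding set_eq_iff vimage_eq
  by (simp add: mem_Pos mem_Piv mem_Stay_pos swap_pivot_in_unit_cube_iff) blast

lemma emeasure_Piv_add_Stay_pos:
  "emeasure lborel (Piv w q k) + emeasure lborel (Stay_pos w q k) = emeasure lborel (Pos w q)"
proof -
  have "emeasure lborel (Piv w q k) + emeasure lborel (Stay_pos w q k)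
      = emeasure lborel (swap_pivot k -` Pos w q)"
    unfolding vimage_swap_pivot_Pos by (rule plus_emeasure) (auto simp: mem_Piv mem_Stay_pos)
  also have "\<dots> = emeasure lborel (Pos w q)"
    by (rule emeasure_vimage_swap_pivot) measurable
  finally show ?thesis .
qed

lemma Stay_pos_iff_min:
  assumes "0 \<le> w $ k"
  shows "p \<in> Stay_pos w q k
    \<longleftrightarrow> p \<in> unit_cube \<and> q \<le> fst p \<bullet> w + (min (fst p $ k) (snd p) - fst p $ k) * w $ k"
proof (cases "snd p \<le> fst p $ k")
  case True
  then have "(snd p - fst p $ k) * w $ k \<le> 0"
    using assms by (simp add: mult_nonpos_nonneg)
  then show ?thesis
    using True by (auto simp: mem_Stay_pos lin_clf_def inner_repl min_def)
next
  case False
  then have "0 \<le> (snd p - fst p $ k) * w $ k"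
    using assms by simp
  then show ?thesis
    using False by (auto simp: mem_Stay_pos lin_clf_def inner_repl min_def)
qed

lemma Stay_pos_transfer_above:
  assumes "0 \<le> w $ i" "0 \<le> w $ j" "x $ i < b" "x $ j < b"
    and "(x, b) \<in> Stay_pos w q i"
  shows "(x, b) \<in> Stay_pos w q j"
  using assms by (simp add: Stay_pos_iff_min)

lemma Stay_pos_transfer_swap_coords:
  assumes "i \<noteq> j" "0 \<le> w $ j" "w $ j \<le> w $ i" "x $ j \<le> x $ i" "b \<le> x $ i"
    and "swap_coords i j (x, b) \<in> Stay_pos w q i"
  shows "(x, b) \<in> Stay_pos w q j"
proof -
  define m where "m = min (x $ j) b"
  have wi: "0 \<le> w $ i" using assms by simp
  have cube: "(x, b) \<in> unit_cube"
    and le: "q \<le> x \<bullet> w + (x $ j - x $ i) * w $ i + (x $ i - x $ j) * w $ j + (m - x $ j) * w $ i"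
    using assms(6) assms(1) by (simp_all add: Stay_pos_iff_min[OF wi] swap_coords_in_unit_cube_iff
        inner_swap_coords m_def)
  have "0 \<le> (w $ i - w $ j) * (x $ i - m)"
    using assms by (simp add: m_def)
  moreover have "x \<bullet> w + (m - x $ j) * w $ j
      = x \<bullet> w + (x $ j - x $ i) * w $ i + (x $ i - x $ j) * w $ j + (m - x $ j) * w $ i
        + (w $ i - w $ j) * (x $ i - m)"
    by (simp add: algebra_simps)
  ultimately show ?thesis
    using cube le assms(2) by (simp add: Stay_pos_iff_min m_def)
qed

lemma Stay_pos_transfer_swap_pivot:
  assumes "i \<noteq> j" "0 \<le> w $ j" "0 \<le> w $ i" "b \<le> x $ j"
    and "swap_coords i j (swap_pivot i (x, b)) \<in> Stay_pos w q i"
  shows "(x, b) \<in> Stay_pos w q j"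
proof -
  have cube: "(x, b) \<in> unit_cube"
    and le: "q \<le> x \<bullet> w + (min (x $ j) (x $ i) - x $ i) * w $ i + (b - x $ j) * w $ j"
    using assms(5) assms(1) by (simp_all add: Stay_pos_iff_min[OF assms(3)] swap_coords_in_unit_cube_iff
        swap_pivot_in_unit_cube_iff inner_swap_coords inner_repl algebra_simps)
  have "(min (x $ j) (x $ i) - x $ i) * w $ i \<le> 0"
    using assms(3) by (simp add: mult_nonpos_nonneg)
  moreover have "min (x $ j) b = b"
    using assms(4) by simp
  ultimately show ?thesis
    using cube le assms(2) by (simp add: Stay_pos_iff_min)
qed

lemma emeasure_Stay_pos_mono:
  fixes w :: "real^'n"
  assumes ij: "i \<noteq> j" and w: "0 \<le> w $ j" "w $ j \<le> w $ i"
  shows "emeasure lborel (Stay_pos w q i) \<le> emeasure lborel (Stay_pos w q j)"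
proof -
  let ?S = "Stay_pos w q i" and ?\<mu> = "emeasure lborel"
  define above where "above = {p :: (real^'n) \<times> real. fst p $ i < snd p \<and> fst p $ j < snd p}"
  define A1 where "A1 = ?S \<inter> above"
  define A2 where "A2 = ?S \<inter> {p. p \<notin> above \<and> fst p $ j \<le> fst p $ i}"
  define A3 where "A3 = ?S \<inter> {p. p \<notin> above \<and> fst p $ i < fst p $ j}"
  define B2 where "B2 = swap_pivot i -` swap_coords i j -` A2"
  define B3 where "B3 = swap_coords i j -` A3"
  have [measurable]: "above \<in> sets borel"
    unfolding above_def by measurable
  have sets_A [measurable]: "A1 \<in> sets borel" "A2 \<in> sets borel" "A3 \<in> sets borel"
    unfolding A1_def A2_def A3_def by measurable
  have sets_B: "B2 \<in> sets borel" "B3 \<in> sets borel"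
    unfolding B2_def B3_def by (intro sets_vimage_swap_pivot sets_vimage_swap_coords; measurable)+
  have A1_sub: "p \<in> Stay_pos w q j \<and> p \<in> above" if "p \<in> A1" for p
    using that Stay_pos_transfer_above[of w i j "fst p" "snd p"] w by (auto simp: A1_def above_def)
  have B2_sub: "p \<in> Stay_pos w q j \<and> snd p \<le> fst p $ j \<and> \<not> (snd p < fst p $ i \<and> fst p $ j < fst p $ i)"
    if "p \<in> B2" for p
  proof -
    obtain x b where p: "p = (x, b)" by fastforce
    from that have "swap_coords i j (swap_pivot i (x, b)) \<in> Stay_pos w q i"
      and "b \<le> x $ j" "\<not> (b < x $ i \<and> x $ j < x $ i)"
      using ij by (auto simp: B2_def A2_def above_def p)
    then show ?thesis
      using Stay_pos_transfer_swap_pivot[OF ij] w by (simp add: p)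
  qed
  have B3_sub: "p \<in> Stay_pos w q j \<and> fst p $ j < fst p $ i \<and> snd p \<le> fst p $ i" if "p \<in> B3" for p
  proof -
    obtain x b where p: "p = (x, b)" by fastforce
    from that have "swap_coords i j (x, b) \<in> Stay_pos w q i" and "x $ j < x $ i" "b \<le> x $ i"
      using ij by (auto simp: B3_def A3_def above_def p)
    then show ?thesis
      using Stay_pos_transfer_swap_coords[OF ij w] by (simp add: p)
  qed
  have "?\<mu> ?S = ?\<mu> (A1 \<union> A2 \<union> A3)"
    by (rule arg_cong[where f = ?\<mu>]) (auto simp: A1_def A2_def A3_def)
  also have "\<dots> = ?\<mu> A1 + ?\<mu> A2 + ?\<mu> A3"
  proof -
    have "A1 \<inter> A2 = {}" "(A1 \<union> A2) \<inter> A3 = {}"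
      by (auto simp: A1_def A2_def A3_def)
    then show ?thesis
      using sets_A by (simp add: plus_emeasure)
  qed
  also have "\<dots> = ?\<mu> A1 + ?\<mu> B2 + ?\<mu> B3"
    unfolding B2_def B3_def
    by (simp add: emeasure_vimage_swap_pivot sets_vimage_swap_coords emeasure_vimage_swap_coords)
  also have "\<dots> = ?\<mu> (A1 \<union> B2 \<union> B3)"
  proof -
    have "A1 \<inter> B2 = {}" "(A1 \<union> B2) \<inter> B3 = {}"
      using A1_sub B2_sub B3_sub by (fastforce simp: above_def)+
    then show ?thesis
      using sets_A sets_B by (simp add: plus_emeasure)
  qed
  also have "\<dots> \<le> ?\<mu> (Stay_pos w q j)"
    using A1_sub B2_sub B3_sub by (intro emeasure_mono) auto
  finally show ?thesis .
qed

theorem mainTheorem9: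
  fixes w :: "real^'n" and q :: real and i j :: 'n
  assumes "i \<noteq> j" and "w $ i \<ge> w $ j" and "w $ j > 0"
  shows "emeasure lborel (Piv w q j) \<le> emeasure lborel (Piv w q i)"
proof -
  let ?\<mu> = "emeasure lborel"
  have "?\<mu> (Stay_pos w q j) + ?\<mu> (Piv w q j) = ?\<mu> (Piv w q i) + ?\<mu> (Stay_pos w q i)"
    using emeasure_Piv_add_Stay_pos[of w q j] emeasure_Piv_add_Stay_pos[of w q i]
    by (simp add: add.commute)
  also have "\<dots> \<le> ?\<mu> (Stay_pos w q j) + ?\<mu> (Piv w q i)"
    using emeasure_Stay_pos_mono[of i j w q] assms by (simp add: add.commute add_left_mono)
  finally show ?thesis
    using emeasure_Stay_pos_less_top[of w q j] by (auto simp: ennreal_add_left_cancel_le)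
qed

end
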